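(* Let $k,s$ be positive integers, $\mathbf a=(a_1,\dots,a_s)$ nonzero integers and $p$ a prime with $p\nmid \gcd(a_{1},\dots,a_{s})$. Then for all $l\ge \xi(p)$, \[\chi_{p}=\sum_{m=0}^{l}T_{\mathbf a}\left(p^{m}\right)=\sum_{m=0}^{\xi(p)}T_{\mathbf a}\left(p^{m}\right)=p^{\xi(p)}\varphi\left(p^{\xi(p)}\right)^{-s}M_{\mathbf a}\left(p^{\xi(p)}\right),\] and in particular, if $a_1x_1^k+\dots+a_sx_s^k\equiv 0\pmod{p^{\xi(p)}}$ has a solution with all $x_j\in(\mathbb Z/p^{\xi(p)}\mathbb Z)^{\times}$, then $a_1x_1^k+\dots+a_sx_s^k=0$ has a solution with all $x_j\in \mathbb Z_{p}^{\times}$ and $\chi_{p}\ge p^{-(s-1)\xi(p)}>0$.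
   Context: $p^{\nu(p)}\Vert k$ defines $\nu(p)$; $\xi(p)=\nu(p)+2$ if $p=2$, $\xi(p)=\nu(p)+1$ otherwise. $e_q(x)=e^{2\pi ix/q}$, $\varphi$ is Euler's function, $W(q,r)=\sum_{1\le h\le q,\ (h,q)=1}e_q(rh^k)$, $T_{\mathbf a}(q)=\varphi(q)^{-s}\sum_{1\le r\le q,\ (r,q)=1}\prod_jW(q,a_jr)$. $M_{\mathbf a}(p^n)$ is the number of $(x_1,\dots,x_s)\in((\mathbb Z/p^n\mathbb Z)^\times)^s$ with $\sum_ja_jx_j^k\equiv0\pmod{p^n}$, and $\chi_p=\lim_{n\to\infty}p^n\varphi(p^n)^{-s}M_{\mathbf a}(p^n)$. $\mathbb Z_p^\times=\{x\in\mathbb Q_p:|x|_p=1\}$. *)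

theory Defs
  imports "HOL-Analysis.Analysis" "HOL-Number_Theory.Number_Theory"
begin

definition nu :: "nat \<Rightarrow> nat \<Rightarrow> nat" where
  "nu k p = multiplicity p k"

definition xi :: "nat \<Rightarrow> nat \<Rightarrow> nat" where
  "xi k p = (if p = 2 then nu k p + 2 else nu k p + 1)"

definition e :: "nat \<Rightarrow> int \<Rightarrow> complex" where
  "e q x = exp (2 * of_real pi * \<i> * of_int x / of_nat q)"

definition W :: "nat \<Rightarrow> nat \<Rightarrow> int \<Rightarrow> complex" where
  "W k q r = (\<Sum>h\<in>{h\<in>{1..q}. coprime h q}. e q (r * int h ^ k))"

definition T :: "nat \<Rightarrow> nat \<Rightarrow> (nat \<Rightarrow> int) \<Rightarrow> nat \<Rightarrow> complex" where
  "T k s a q = (\<Sum>r\<in>{r\<in>{1..q}. coprime r q}. (\<Prod>j\<in>{1..s}. W k q (a j * int r)))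
                / of_nat (totient q) ^ s"

definition M :: "nat \<Rightarrow> nat \<Rightarrow> (nat \<Rightarrow> int) \<Rightarrow> nat \<Rightarrow> nat" where
  "M k s a q = card {x \<in> PiE {1..s} (\<lambda>_. {y\<in>{0..<q}. coprime y q}).
                      int q dvd (\<Sum>j\<in>{1..s}. a j * int (x j) ^ k)}"

definition chi :: "nat \<Rightarrow> nat \<Rightarrow> (nat \<Rightarrow> int) \<Rightarrow> nat \<Rightarrow> real" where
  "chi k s a p = lim (\<lambda>n. real p ^ n * real (M k s a (p ^ n)) / real (totient (p ^ n)) ^ s)"

text \<open>A solution in (Z_p^*)^s of sum a_j x_j^k = 0, each p-adic integer x_j being represented
  by a p-adically Cauchy sequence of integers x j n (x j (n+1) = x j n mod p^n), i.e. an element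
  of the inverse limit of Z/p^n Z; units means the approximations are prime to p.\<close>
definition padic_unit_solution :: "nat \<Rightarrow> nat \<Rightarrow> (nat \<Rightarrow> int) \<Rightarrow> nat \<Rightarrow> bool" where
  "padic_unit_solution k s a p \<longleftrightarrow>
     (\<exists>x :: nat \<Rightarrow> nat \<Rightarrow> int.
        (\<forall>j\<in>{1..s}. \<forall>n. [x j (Suc n) = x j n] (mod int p ^ n)) \<and>
        (\<forall>j\<in>{1..s}. \<forall>n. coprime (x j n) (int p)) \<and>
        (\<forall>n. [(\<Sum>j\<in>{1..s}. a j * x j n ^ k) = 0] (mod int p ^ n)))"

end

theory Submission
  imports Defs
begin

text \<open>Orthogonality of the additive characters modulo \<open>p^l\<close>, with the summation variable split
  according to its \<open>p\<close>-adic valuation, gives \<open>p^l M(p^l) / phi(p^l)^s = T(1) + ... + T(p^l)\<close>.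
  Write \<open>k = k' p^v\<close> with \<open>p\<close> not dividing \<open>k'\<close>; then \<open>(1 + p^j t)^k\<close> is congruent to
  \<open>1 + k' p^(j+v) t\<close> modulo \<open>p^(j+v+1)\<close> for \<open>j \<ge> 1\<close> (\<open>j \<ge> 2\<close> if \<open>p = 2\<close>). For \<open>m > xi(p)\<close> and \<open>p\<close> not dividing \<open>b\<close>, the
  substitution \<open>h \<mapsto> h (1 + p^(m-v-1) t)\<close> multiplies each term of \<open>W(p^m, b)\<close> by a nontrivial
  character of \<open>t\<close> modulo \<open>p\<close>, so averaging over \<open>t\<close> shows \<open>W(p^m, b) = 0\<close>; as some \<open>a_j\<close> is
  prime to \<open>p\<close>, also \<open>T(p^m) = 0\<close>. So the densities \<open>p^l M(p^l) / phi(p^l)^s\<close> are constant from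
  \<open>l = xi(p)\<close> on, which identifies \<open>chi_p\<close> and bounds it below by \<open>p^xi / p^(xi s)\<close> once
  \<open>M(p^xi) \<ge> 1\<close>. The same power congruence drives a Hensel lifting of a unit solution modulo
  \<open>p^xi\<close> to a coherent sequence of unit solutions modulo every \<open>p^n\<close>.\<close>

lemma prime_coprime_right_iff:
  fixes p :: "'a :: semiring_gcd"
  assumes "prime p"
  shows "coprime a p \<longleftrightarrow> \<not> p dvd a"
  using prime_imp_coprime[OF assms, of a] coprime_common_divisor[of a p p] not_prime_unit[of p] assms
  by (auto simp: coprime_commute)

lemma sum_fun_upd_eq:
  fixes f :: "'a \<Rightarrow> 'b \<Rightarrow> 'c :: ab_group_add"
  assumes "finite I" and "i \<in> I"
  shows "(\<Sum>j\<in>I. f j ((y(i := z)) j)) = (\<Sum>j\<in>I. f j (y j)) + (f i z - f i (y i))"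
proof -
  have "(\<Sum>j\<in>I - {i}. f j ((y(i := z)) j)) = (\<Sum>j\<in>I - {i}. f j (y j))" by (intro sum.cong) auto
  then show ?thesis
    using sum.remove[OF assms, of "\<lambda>j. f j ((y(i := z)) j)"] sum.remove[OF assms, of "\<lambda>j. f j (y j)"]
    by (simp add: algebra_simps)
qed

section \<open>Powers of \<open>1 + p^j t\<close>\<close>

text \<open>In the binomial expansion the terms with \<open>1 < i < p\<close> gain a factor \<open>p\<close> from \<open>p choose i\<close>,
  and the last term \<open>(p^j w)^p\<close> is divisible by \<open>p^(j+2)\<close> because \<open>(p - 1) j \<ge> 2\<close>: this is where
  \<open>j \<ge> 2\<close> is needed for \<open>p = 2\<close>.\<close>
lemma one_plus_prime_power_pow_prime:
  fixes p j :: nat and w :: int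
  assumes p: "prime p" and j: "j \<ge> 1" and j2: "p = 2 \<Longrightarrow> j \<ge> 2"
  shows "\<exists>w'. (1 + int p ^ j * w) ^ p = 1 + int p ^ (j + 1) * w' \<and> [w' = w] (mod int p)"
proof -
  let ?P = "int p"
  let ?term = "\<lambda>i. of_nat (p choose i) * (?P ^ j * w) ^ i"
  have p1: "p > 1" using p prime_gt_1_nat by blast
  have high_terms: "?P ^ (j + 2) dvd ?term i" if "i \<in> {2..p}" for i
  proof (cases "i = p")
    case True
    have "j + 2 \<le> p * j"
    proof (cases "p = 2")
      case False
      then have "3 * j \<le> p * j" using p1 by simp
      then show ?thesis using j by linarith
    qed (use j2 in simp)
    then have "?P ^ (j + 2) dvd ?P ^ (p * j)" by (rule le_imp_power_dvd)
    then show ?thesis using True by (simp add: power_mult_distrib power_mult[symmetric] mult.commute)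
  next
    case False
    with that have i: "0 < i" "i < p" "2 \<le> i" by auto
    have "?P dvd of_nat (p choose i)"
      using dvd_choose_prime[OF i(2) _ _ p] i by (simp add: int_dvd_int_iff)
    moreover have "j * 2 \<le> j * i" using i by simp
    then have "j + 1 \<le> j * i" using j by linarith
    then have "?P ^ (j + 1) dvd ?P ^ (j * i)" by (rule le_imp_power_dvd)
    then have "?P ^ (j + 1) dvd (?P ^ j * w) ^ i"
      by (simp add: power_mult_distrib power_mult[symmetric] dvd_mult2)
    ultimately have "?P * ?P ^ (j + 1) dvd ?term i" by (rule mult_dvd_mono)
    then show ?thesis by (simp add: algebra_simps)
  qed
  have "{..p} = {0, 1} \<union> {2..p}" using p1 by auto
  then have "(\<Sum>i\<le>p. ?term i) = (\<Sum>i\<in>{0, 1}. ?term i) + (\<Sum>i\<in>{2..p}. ?term i)"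
    by (simp only:) (rule sum.union_disjoint, auto)
  moreover have "?P ^ (j + 2) dvd (\<Sum>i\<in>{2..p}. ?term i)" by (rule dvd_sum) (rule high_terms)
  then obtain z where "(\<Sum>i\<in>{2..p}. ?term i) = ?P ^ (j + 2) * z" ..
  ultimately have "(1 + ?P ^ j * w) ^ p = 1 + ?P ^ (j + 1) * (w + ?P * z)"
    using binomial_ring[of "?P ^ j * w" 1 p] by (simp add: algebra_simps)
  moreover have "[w + ?P * z = w] (mod ?P)" by (simp add: cong_iff_dvd_diff)
  ultimately show ?thesis by blast
qed

lemma one_plus_prime_power_pow:
  fixes p j n :: nat and w :: int
  assumes "j \<ge> 1"
  shows "\<exists>w'. (1 + int p ^ j * w) ^ n = 1 + int p ^ j * w' \<and> [w' = int n * w] (mod int p)"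
proof (induction n)
  case (Suc n)
  then obtain w' where w': "(1 + int p ^ j * w) ^ n = 1 + int p ^ j * w'" "[w' = int n * w] (mod int p)"
    by blast
  have "(1 + int p ^ j * w) ^ Suc n = 1 + int p ^ j * (w' + w + int p ^ j * w' * w)"
    using w'(1) by (simp add: algebra_simps)
  moreover have "[int p ^ j * w' * w = 0] (mod int p)"
    using assms by (simp add: cong_0_iff dvd_power)
  then have "[w' + w + int p ^ j * w' * w = int n * w + w + 0] (mod int p)"
    using w'(2) by (intro cong_add) auto
  then have "[w' + w + int p ^ j * w' * w = int (Suc n) * w] (mod int p)"
    by (simp add: algebra_simps)
  ultimately show ?case by blast
qed (rule exI[of _ 0], simp)

lemma one_plus_prime_power_pow_prime_power:
  fixes p j i :: nat and w :: int
  assumes p: "prime p" and j: "j \<ge> 1" and j2: "p = 2 \<Longrightarrow> j \<ge> 2"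
  shows "\<exists>w'. (1 + int p ^ j * w) ^ (p ^ i) = 1 + int p ^ (j + i) * w' \<and> [w' = w] (mod int p)"
proof (induction i)
  case (Suc i)
  then obtain w' where w': "(1 + int p ^ j * w) ^ (p ^ i) = 1 + int p ^ (j + i) * w'" "[w' = w] (mod int p)"
    by blast
  obtain w'' where w'': "(1 + int p ^ (j + i) * w') ^ p = 1 + int p ^ (j + i + 1) * w''"
    "[w'' = w'] (mod int p)"
    using one_plus_prime_power_pow_prime[OF p, of "j + i" w'] j j2 by force
  have "(1 + int p ^ j * w) ^ (p ^ Suc i) = ((1 + int p ^ j * w) ^ (p ^ i)) ^ p"
    by (simp add: power_mult[symmetric] mult.commute)
  also have "\<dots> = 1 + int p ^ (j + Suc i) * w''" using w' w'' by simp
  finally show ?case using w'' w'(2) cong_trans by fastforce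
qed auto

lemma one_plus_prime_power_pow_cong:
  fixes p j k :: nat and t :: int
  assumes p: "prime p" and j: "j \<ge> 1" and j2: "p = 2 \<Longrightarrow> j \<ge> 2"
  defines "v \<equiv> multiplicity p k"
  shows "[(1 + int p ^ j * t) ^ k = 1 + int (k div p ^ v) * int p ^ (j + v) * t] (mod int p ^ (j + v + 1))"
proof -
  define k' where "k' = k div p ^ v"
  have k: "k = k' * p ^ v" unfolding k'_def v_def using multiplicity_dvd[of p k] by simp
  obtain w where w: "(1 + int p ^ j * t) ^ k' = 1 + int p ^ j * w" "[w = int k' * t] (mod int p)"
    using one_plus_prime_power_pow[OF j] by blast
  obtain w' where w': "(1 + int p ^ j * w) ^ (p ^ v) = 1 + int p ^ (j + v) * w'" "[w' = w] (mod int p)"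
    using one_plus_prime_power_pow_prime_power[OF p j j2] by blast
  have "int p dvd w' - int k' * t" using w(2) w'(2) cong_trans cong_iff_dvd_diff by blast
  then have "int p ^ (j + v) * int p dvd int p ^ (j + v) * (w' - int k' * t)" by simp
  then have "[1 + int p ^ (j + v) * w' = 1 + int k' * int p ^ (j + v) * t] (mod int p ^ (j + v + 1))"
    by (simp add: cong_iff_dvd_diff algebra_simps)
  moreover have "(1 + int p ^ j * t) ^ k = 1 + int p ^ (j + v) * w'"
    using w(1) w'(1) k by (simp add: power_mult)
  ultimately show ?thesis unfolding k'_def by simp
qed

lemma e_add: "e q (x + y) = e q x * e q y"
  unfolding e_def by (simp add: add_divide_distrib distrib_left exp_add)

lemma e_of_nat_mult: "e q (int n * x) = e q x ^ n"
  unfolding e_def by (simp add: exp_of_nat_mult[symmetric] mult_ac)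

lemma e_0 [simp]: "e q 0 = 1"
  unfolding e_def by simp

lemma e_sum: "finite I \<Longrightarrow> e q (\<Sum>j\<in>I. f j) = (\<Prod>j\<in>I. e q (f j))"
  by (induction I rule: finite_induct) (simp_all add: e_add)

lemma e_mult_modulus: "c > 0 \<Longrightarrow> e (c * q) (int c * x) = e q x"
  unfolding e_def by (simp add: field_simps)

lemma e_eq_1_iff:
  assumes "q > 0"
  shows "e q x = 1 \<longleftrightarrow> int q dvd x"
proof -
  have "Im (2 * of_real pi * \<i> * of_int x / of_nat q) = of_int x / of_nat q * (2 * pi)"
    by (simp add: Im_divide_of_nat)
  then have "e q x = 1 \<longleftrightarrow> (\<exists>n::int. 2 * pi * of_int x / real q = 2 * of_int n * pi)"
    unfolding e_def exp_eq_1 by (simp add: Re_divide_of_nat)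
  also have "\<dots> \<longleftrightarrow> (\<exists>n. x = int q * n)"
  proof -
    have "2 * pi * of_int x / real q = 2 * of_int n * pi \<longleftrightarrow> real_of_int x = real q * of_int n"
      for n :: int
      using assms pi_gt_zero by (simp add: field_simps)
    then show ?thesis by (metis of_int_eq_iff of_int_mult of_int_of_nat_eq)
  qed
  finally show ?thesis by (auto simp: dvd_def)
qed

lemma e_cong:
  assumes "q > 0" and "[x = y] (mod int q)"
  shows "e q x = e q y"
proof -
  obtain z where "x = y + int q * z"
    using assms(2) by (metis cong_iff_lin cong_sym)
  moreover have "e q (int q * z) = 1" using e_eq_1_iff[OF assms(1)] by simp
  ultimately show ?thesis by (simp add: e_add)
qed

lemma e_power_cong:
  fixes x y b :: int
  assumes "q > 0" and "[x = y] (mod int q)"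
  shows "e q (b * x ^ k) = e q (b * y ^ k)"
  using assms by (intro e_cong cong_mult cong_pow cong_refl) auto

lemma sum_e_multiples:
  assumes "q > 0"
  shows "(\<Sum>t<q. e q (int t * N)) = (if int q dvd N then of_nat q else 0)"
proof (cases "int q dvd N")
  case True
  then have "e q (int t * N) = 1" for t using e_eq_1_iff[OF assms] by simp
  then show ?thesis using True by simp
next
  case False
  have "e q N ^ q = 1" using e_of_nat_mult[of q q N] e_eq_1_iff[OF assms, of "int q * N"] by simp
  moreover have "e q N \<noteq> 1" using False e_eq_1_iff[OF assms] by blast
  ultimately show ?thesis using False by (simp add: e_of_nat_mult sum_gp_strict)
qed

definition coprime_residues :: "nat \<Rightarrow> nat set" where
  "coprime_residues q = {x \<in> {0..<q}. coprime x q}"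

lemma finite_coprime_residues [simp]: "finite (coprime_residues q)"
  by (simp add: coprime_residues_def)

lemma sum_totatives_eq_sum_coprime_residues:
  fixes f :: "nat \<Rightarrow> 'a :: comm_monoid_add"
  assumes q: "q > 0" and periodic: "\<And>x y. [x = y] (mod q) \<Longrightarrow> f x = f y"
  shows "(\<Sum>x\<in>totatives q. f x) = (\<Sum>x\<in>coprime_residues q. f x)"
proof (rule sum.reindex_bij_witness[of _ "\<lambda>x. if x = 0 then q else x" "\<lambda>x. x mod q"])
  fix x assume "x \<in> totatives q"
  then show "(if x mod q = 0 then q else x mod q) = x" and "x mod q \<in> coprime_residues q"
    and "f (x mod q) = f x"
    using q by (auto simp: coprime_residues_def totatives_def cong_def intro: periodic
        dest: le_neq_implies_less)
next
  fix x assume "x \<in> coprime_residues q"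
  then show "(if x = 0 then q else x) mod q = x" and "(if x = 0 then q else x) \<in> totatives q"
    using q by (auto simp: coprime_residues_def totatives_def)
qed

lemma card_coprime_residues: "q > 0 \<Longrightarrow> card (coprime_residues q) = totient q"
  using sum_totatives_eq_sum_coprime_residues[of q "\<lambda>_. 1 :: nat"] by (simp add: totient_def)

lemma sum_coprime_residues_mult_unit:
  assumes c: "coprime c q"
  shows "(\<Sum>x\<in>coprime_residues q. f ((x * c) mod q)) = (\<Sum>x\<in>coprime_residues q. f x)"
proof -
  let ?g = "\<lambda>x. (x * c) mod q"
  have inj: "inj_on ?g (coprime_residues q)"
  proof (rule inj_onI)
    fix x y assume "x \<in> coprime_residues q" "y \<in> coprime_residues q" "?g x = ?g y"
    then show "x = y"
      using cong_mult_rcancel_nat[OF c, of x y]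
      by (auto simp: coprime_residues_def cong_def intro: cong_less_modulus_unique_nat)
  qed
  have "?g ` coprime_residues q \<subseteq> coprime_residues q"
    using c by (auto simp: coprime_residues_def)
  with inj have "?g ` coprime_residues q = coprime_residues q"
    by (intro endo_inj_surj) simp_all
  then show ?thesis using sum.reindex[OF inj, of f] by simp
qed

lemma sum_coprime_residues_prime_power_lift:
  fixes f :: "nat \<Rightarrow> 'a :: comm_semiring_1"
  assumes p: "prime p" and m: "1 \<le> m" "m \<le> l"
    and periodic: "\<And>x y. [x = y] (mod p ^ m) \<Longrightarrow> f x = f y"
  shows "(\<Sum>x\<in>coprime_residues (p ^ l). f x) = of_nat (p ^ (l - m)) * (\<Sum>x\<in>coprime_residues (p ^ m). f x)"
proof -
  let ?q = "p ^ m" and ?c = "p ^ (l - m)"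
  have ql: "p ^ l = ?q * ?c" using m by (simp flip: power_add)
  have q: "?q > 0" using p prime_gt_0_nat by simp
  have coprime_iff: "coprime x (p ^ n) \<longleftrightarrow> \<not> p dvd x" if "n \<ge> 1" for x n
    using that by (simp add: prime_coprime_right_iff[OF p])
  have "(\<Sum>x\<in>coprime_residues (p ^ l). f x) = (\<Sum>(h, i)\<in>coprime_residues ?q \<times> {..<?c}. f h)"
  proof (rule sum.reindex_bij_witness[of _ "\<lambda>(h, i). h + ?q * i" "\<lambda>x. (x mod ?q, x div ?q)"])
    fix x assume x: "x \<in> coprime_residues (p ^ l)"
    have "\<not> p dvd x mod ?q" using x m coprime_iff
      by (auto simp: coprime_residues_def dvd_mod_iff dvd_power)
    then show "(x mod ?q, x div ?q) \<in> coprime_residues ?q \<times> {..<?c}"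
      using x q m coprime_iff by (auto simp: coprime_residues_def ql less_mult_imp_div_less mult.commute)
    show "(case (x mod ?q, x div ?q) of (h, i) \<Rightarrow> h + ?q * i) = x" by simp
    show "(case (x mod ?q, x div ?q) of (h, i) \<Rightarrow> f h) = f x" by (auto intro: periodic simp: cong_def)
  next
    fix y assume y: "y \<in> coprime_residues ?q \<times> {..<?c}"
    then obtain h i where y: "y = (h, i)" "h < ?q" "\<not> p dvd h" "i < ?c"
      using m coprime_iff by (auto simp: coprime_residues_def)
    have "h + ?q * i < ?q * (i + 1)" using y by simp
    also have "\<dots> \<le> p ^ l" unfolding ql using y by (intro mult_le_mono2) simp
    finally have "h + ?q * i < p ^ l" .
    moreover have "\<not> p dvd h + ?q * i" using y m by (simp add: dvd_add_left_iff dvd_power)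
    ultimately show "(case y of (h, i) \<Rightarrow> h + ?q * i) \<in> coprime_residues (p ^ l)"
      using y m coprime_iff by (auto simp: coprime_residues_def)
    show "(case (case y of (h, i) \<Rightarrow> h + ?q * i) of x \<Rightarrow> (x mod ?q, x div ?q)) = y"
      using y q by simp
  qed
  also have "\<dots> = of_nat ?c * (\<Sum>h\<in>coprime_residues ?q. f h)"
    by (simp add: sum.cartesian_product[symmetric] sum_distrib_right mult.commute)
  finally show ?thesis .
qed

text \<open>Each \<open>t < p^l\<close> is uniquely \<open>p^(l-m) r\<close> with \<open>r\<close> prime to \<open>p^m\<close>; \<open>t = 0\<close> is the case \<open>m = 0\<close>,
  because \<open>coprime_residues 1 = {0}\<close>.\<close>
lemma sum_lessThan_prime_power_split:
  assumes p: "prime p"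
  shows "(\<Sum>t<p ^ l. G t) = (\<Sum>m\<in>{0..l}. \<Sum>r\<in>coprime_residues (p ^ m). G (p ^ (l - m) * r))"
proof (induction l arbitrary: G)
  case (Suc l)
  have p0: "p > 0" using p prime_gt_0_nat by blast
  have split: "{..<p ^ Suc l} = coprime_residues (p ^ Suc l) \<union> (\<lambda>t. p * t) ` {..<p ^ l}"
  proof (intro equalityI subsetI)
    fix t assume t: "t \<in> {..<p ^ Suc l}"
    show "t \<in> coprime_residues (p ^ Suc l) \<union> (\<lambda>t. p * t) ` {..<p ^ l}"
    proof (cases "p dvd t")
      case True
      then obtain t' where "t = p * t'" ..
      with t p0 show ?thesis by auto
    next
      case False
      with t show ?thesis by (simp add: coprime_residues_def prime_coprime_right_iff[OF p])
    qed
  qed (use p0 in \<open>auto simp: coprime_residues_def\<close>)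
  have disjoint: "coprime_residues (p ^ Suc l) \<inter> (\<lambda>t. p * t) ` {..<p ^ l} = {}"
    using prime_gt_1_nat[OF p] by (auto simp: coprime_residues_def prime_coprime_right_iff[OF p])
  have inj: "inj_on (\<lambda>t. p * t) {..<p ^ l}" using p0 by (auto simp: inj_on_def)
  have "(\<Sum>t<p ^ Suc l. G t) = (\<Sum>t\<in>coprime_residues (p ^ Suc l). G t) + (\<Sum>t<p ^ l. G (p * t))"
    unfolding split using disjoint by (simp add: sum.union_disjoint sum.reindex[OF inj])
  also have "(\<Sum>t<p ^ l. G (p * t)) = (\<Sum>m\<in>{0..l}. \<Sum>r\<in>coprime_residues (p ^ m). G (p ^ (Suc l - m) * r))"
    using Suc.IH[of "\<lambda>t. G (p * t)"] by (simp add: Suc_diff_le mult.assoc)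
  finally show ?case by (simp add: sum.atLeast0_atMost_Suc add.commute)
qed (simp add: coprime_residues_def)

lemma W_eq_sum_coprime_residues:
  assumes q: "q > 0"
  shows "W k q b = (\<Sum>x\<in>coprime_residues q. e q (b * int x ^ k))"
proof -
  have periodic: "e q (b * int x ^ k) = e q (b * int y ^ k)" if "[x = y] (mod q)" for x y
    using that by (intro e_power_cong[OF q]) (simp add: cong_int_iff)
  have "{h \<in> {1..q}. coprime h q} = totatives q" by (auto simp: totatives_def)
  then show ?thesis unfolding W_def using sum_totatives_eq_sum_coprime_residues[OF q periodic] by simp
qed

lemma W_cong:
  assumes "q > 0" and "[b = b'] (mod int q)"
  shows "W k q b = W k q b'"
  unfolding W_def using assms by (intro sum.cong refl e_cong cong_mult cong_refl) auto

lemma T_eq_sum_coprime_residues: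
  assumes q: "q > 0"
  shows "T k s a q = (\<Sum>r\<in>coprime_residues q. \<Prod>j\<in>{1..s}. W k q (a j * int r)) / of_nat (totient q) ^ s"
proof -
  have periodic: "(\<Prod>j\<in>{1..s}. W k q (a j * int x)) = (\<Prod>j\<in>{1..s}. W k q (a j * int y))"
    if "[x = y] (mod q)" for x y
    using that q by (intro prod.cong refl W_cong cong_mult cong_refl) (simp_all add: cong_int_iff)
  have "{r \<in> {1..q}. coprime r q} = totatives q" by (auto simp: totatives_def)
  then show ?thesis unfolding T_def using sum_totatives_eq_sum_coprime_residues[OF q periodic] by simp
qed

lemma W_prime_power_scaled:
  assumes p: "prime p" and ml: "m \<le> l"
  shows "W k (p ^ l) (int (p ^ (l - m)) * c) =
           of_nat (totient (p ^ l)) / of_nat (totient (p ^ m)) * W k (p ^ m) c"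
proof -
  have p0: "p > 0" using p prime_gt_0_nat by blast
  have "e (p ^ l) (int (p ^ (l - m)) * c * int x ^ k) = e (p ^ m) (c * int x ^ k)" for x
    using e_mult_modulus[of "p ^ (l - m)" "p ^ m" "c * int x ^ k"] p0 ml
    by (simp add: mult.assoc flip: power_add)
  then have W_l: "W k (p ^ l) (int (p ^ (l - m)) * c) = (\<Sum>x\<in>coprime_residues (p ^ l). e (p ^ m) (c * int x ^ k))"
    using p0 by (simp add: W_eq_sum_coprime_residues)
  show ?thesis
  proof (cases "m = 0")
    case True
    then have "e (p ^ m) y = 1" for y using e_eq_1_iff[of 1 y] by simp
    then show ?thesis using True W_l p0 by (simp add: W_eq_sum_coprime_residues card_coprime_residues)
  next
    case False
    have "p ^ (l - 1) = p ^ (l - m) * p ^ (m - 1)" using False ml by (simp flip: power_add)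
    then have "totient (p ^ l) = p ^ (l - m) * totient (p ^ m)"
      using False ml totient_power[of m p] totient_power[of l p] by simp
    moreover have "totient (p ^ m) > 0" using p0 by simp
    moreover have "e (p ^ m) (c * int x ^ k) = e (p ^ m) (c * int y ^ k)" if "[x = y] (mod p ^ m)" for x y
    proof (rule e_power_cong)
      show "[int x = int y] (mod int (p ^ m))" using that by (simp only: cong_int_iff)
    qed (use p0 in simp)
    note lift = sum_coprime_residues_prime_power_lift[OF p _ ml this]
    ultimately show ?thesis using W_l lift False p0 by (simp add: W_eq_sum_coprime_residues)
  qed
qed

lemma e_power_twist:
  fixes p j k m :: nat and b t x :: int
  assumes p: "prime p" and j: "j \<ge> 1" and j2: "p = 2 \<Longrightarrow> j \<ge> 2"
  defines "v \<equiv> multiplicity p k"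
  assumes m: "m = j + v + 1"
  shows "e (p ^ m) (b * (x * (1 + int p ^ j * t)) ^ k) =
           e (p ^ m) (b * x ^ k) * e p (t * (b * x ^ k * int (k div p ^ v)))"
proof -
  have p0: "p > 0" using p prime_gt_0_nat by blast
  have "[(1 + int p ^ j * t) ^ k = 1 + int (k div p ^ v) * int p ^ (j + v) * t] (mod int p ^ m)"
    using one_plus_prime_power_pow_cong[OF p j j2, of t k] unfolding v_def m by simp
  then have "[b * x ^ k * (1 + int p ^ j * t) ^ k =
              b * x ^ k * (1 + int (k div p ^ v) * int p ^ (j + v) * t)] (mod int p ^ m)"
    by (rule cong_scalar_left)
  moreover have "b * x ^ k * (1 + int (k div p ^ v) * int p ^ (j + v) * t) =
                   b * x ^ k + int (p ^ (j + v)) * (t * (b * x ^ k * int (k div p ^ v)))"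
    by (simp add: algebra_simps)
  ultimately have "[b * (x * (1 + int p ^ j * t)) ^ k =
              b * x ^ k + int (p ^ (j + v)) * (t * (b * x ^ k * int (k div p ^ v)))] (mod int (p ^ m))"
    by (simp add: power_mult_distrib mult.assoc)
  then have "e (p ^ m) (b * (x * (1 + int p ^ j * t)) ^ k) =
               e (p ^ m) (b * x ^ k + int (p ^ (j + v)) * (t * (b * x ^ k * int (k div p ^ v))))"
    using p0 by (intro e_cong) auto
  also have "\<dots> = e (p ^ m) (b * x ^ k) * e p (t * (b * x ^ k * int (k div p ^ v)))"
  proof -
    have "p ^ m = p ^ (j + v) * p" by (simp add: m)
    then have "e (p ^ m) (int (p ^ (j + v)) * y) = e p y" for y
      using e_mult_modulus[of "p ^ (j + v)" p y] p0 by simp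
    then show ?thesis by (simp add: e_add)
  qed
  finally show ?thesis .
qed

lemma W_prime_power_twist:
  fixes p j k m t :: nat and b :: int
  assumes p: "prime p" and j: "j \<ge> 1" and j2: "p = 2 \<Longrightarrow> j \<ge> 2"
  defines "v \<equiv> multiplicity p k"
  assumes m: "m = j + v + 1"
  shows "W k (p ^ m) b = (\<Sum>x\<in>coprime_residues (p ^ m).
           e (p ^ m) (b * int x ^ k) * e p (int t * (b * int x ^ k * int (k div p ^ v))))"
proof -
  have p0: "p > 0" using p prime_gt_0_nat by blast
  define c where "c = 1 + p ^ j * t"
  have "p dvd p ^ j * t" using j by (simp add: dvd_power)
  then have "p dvd c \<longleftrightarrow> p dvd 1" unfolding c_def by (rule dvd_add_left_iff)
  then have "\<not> p dvd c" using prime_gt_1_nat[OF p] by simp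
  then have c: "coprime c (p ^ m)" using m by (simp add: prime_coprime_right_iff[OF p])
  have "W k (p ^ m) b = (\<Sum>x\<in>coprime_residues (p ^ m). e (p ^ m) (b * int ((x * c) mod p ^ m) ^ k))"
    using sum_coprime_residues_mult_unit[OF c, of "\<lambda>y. e (p ^ m) (b * int y ^ k)"] p0
    by (simp add: W_eq_sum_coprime_residues)
  also have "\<dots> = (\<Sum>x\<in>coprime_residues (p ^ m). e (p ^ m) (b * (int x * (1 + int p ^ j * int t)) ^ k))"
  proof (intro sum.cong refl e_power_cong)
    fix x
    show "[int ((x * c) mod p ^ m) = int x * (1 + int p ^ j * int t)] (mod int (p ^ m))"
      by (simp add: cong_def zmod_int c_def algebra_simps)
  qed (use p0 in simp)
  also have "\<dots> = (\<Sum>x\<in>coprime_residues (p ^ m).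
                    e (p ^ m) (b * int x ^ k) * e p (int t * (b * int x ^ k * int (k div p ^ v))))"
    using e_power_twist[OF p j j2] m unfolding v_def by simp
  finally show ?thesis .
qed

lemma W_prime_power_eq_0:
  fixes p k m :: nat and b :: int
  assumes p: "prime p" and k: "k > 0" and m: "xi k p < m" and b: "\<not> int p dvd b"
  shows "W k (p ^ m) b = 0"
proof -
  define v where "v = multiplicity p k"
  define j where "j = m - v - 1"
  have j1: "j \<ge> 1" and j2: "p = 2 \<Longrightarrow> j \<ge> 2" and mj: "m = j + v + 1"
    using m unfolding j_def v_def xi_def nu_def by (auto split: if_splits)
  have p0: "p > 0" using p prime_gt_0_nat by blast
  have "\<not> p dvd k div p ^ v"
    unfolding v_def by (rule multiplicity_decompose) (use k p in \<open>auto simp: prime_gt_1_nat\<close>)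
  then have k': "\<not> int p dvd int (k div p ^ v)" by simp
  let ?N = "\<lambda>x. b * int x ^ k * int (k div p ^ v)"
  have character_sum_0: "(\<Sum>t<p. e p (int t * ?N x)) = 0" if "x \<in> coprime_residues (p ^ m)" for x
  proof -
    have "\<not> p dvd x" using that mj by (simp add: coprime_residues_def prime_coprime_right_iff[OF p])
    then have "\<not> int p dvd ?N x"
      using b k' k p by (simp add: prime_dvd_mult_iff prime_dvd_power_iff)
    then show ?thesis using sum_e_multiples[OF p0] by simp
  qed
  \<comment> \<open>every twist of \<open>W\<close> by \<open>t < p\<close> is \<open>W\<close> itself, and averaging over \<open>t\<close> kills every term\<close>
  have "of_nat p * W k (p ^ m) b = (\<Sum>t<p. W k (p ^ m) b)" by simp
  also have "\<dots> = (\<Sum>t<p. \<Sum>x\<in>coprime_residues (p ^ m). e (p ^ m) (b * int x ^ k) * e p (int t * ?N x))"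
    using W_prime_power_twist[OF p j1 j2] mj unfolding v_def by simp
  also have "\<dots> = (\<Sum>x\<in>coprime_residues (p ^ m). e (p ^ m) (b * int x ^ k) * (\<Sum>t<p. e p (int t * ?N x)))"
    by (simp add: sum.swap[of _ "{..<p}"] sum_distrib_left)
  also have "\<dots> = 0" using character_sum_0 by simp
  finally show ?thesis using p0 by simp
qed

section \<open>Counting solutions by orthogonality\<close>

lemma M_eq_sum_prod_W:
  assumes q: "q > 0"
  shows "of_nat q * of_nat (M k s a q) = (\<Sum>t<q. \<Prod>j\<in>{1..s}. W k q (a j * int t))"
proof -
  let ?X = "PiE {1..s} (\<lambda>_. coprime_residues q)"
  let ?S = "\<lambda>x. \<Sum>j\<in>{1..s}. a j * int (x j) ^ k"
  have "M k s a q = card {x \<in> ?X. int q dvd ?S x}" unfolding M_def coprime_residues_def ..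
  then have "of_nat q * of_nat (M k s a q) = (\<Sum>x\<in>?X. if int q dvd ?S x then of_nat q else 0 :: complex)"
    by (simp add: sum.inter_filter[symmetric] finite_PiE)
  also have "\<dots> = (\<Sum>x\<in>?X. \<Sum>t<q. e q (int t * ?S x))" using sum_e_multiples[OF q] by simp
  also have "\<dots> = (\<Sum>t<q. \<Sum>x\<in>?X. \<Prod>j\<in>{1..s}. e q (int t * (a j * int (x j) ^ k)))"
    by (subst sum.swap) (simp add: sum_distrib_left e_sum)
  also have "\<dots> = (\<Sum>t<q. \<Prod>j\<in>{1..s}. \<Sum>x\<in>coprime_residues q. e q (int t * (a j * int x ^ k)))"
    by (simp add: prod_sum_PiE)
  also have "\<dots> = (\<Sum>t<q. \<Prod>j\<in>{1..s}. W k q (a j * int t))"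
    using q by (simp add: W_eq_sum_coprime_residues mult_ac)
  finally show ?thesis .
qed

lemma sum_T_prime_powers:
  assumes p: "prime p"
  shows "(\<Sum>m\<in>{0..l}. T k s a (p ^ m)) =
           of_nat (p ^ l) * of_nat (M k s a (p ^ l)) / of_nat (totient (p ^ l)) ^ s"
proof -
  have p0: "p > 0" using p prime_gt_0_nat by blast
  let ?G = "\<lambda>t. \<Prod>j\<in>{1..s}. W k (p ^ l) (a j * int t)"
  have block: "(\<Sum>r\<in>coprime_residues (p ^ m). ?G (p ^ (l - m) * r)) =
                 of_nat (totient (p ^ l)) ^ s * T k s a (p ^ m)" if ml: "m \<le> l" for m
  proof -
    have "?G (p ^ (l - m) * r) =
            (of_nat (totient (p ^ l)) / of_nat (totient (p ^ m))) ^ s * (\<Prod>j\<in>{1..s}. W k (p ^ m) (a j * int r))"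
      for r
    proof -
      have "a j * int (p ^ (l - m) * r) = int (p ^ (l - m)) * (a j * int r)" for j by simp
      then show ?thesis by (simp only: W_prime_power_scaled[OF p ml] prod.distrib) simp
    qed
    moreover have "totient (p ^ m) > 0" using p0 by simp
    ultimately show ?thesis
      using T_eq_sum_coprime_residues[of "p ^ m"] p0 by (simp add: sum_distrib_left sum_divide_distrib power_divide)
  qed
  have "of_nat (p ^ l) * of_nat (M k s a (p ^ l)) = (\<Sum>t<p ^ l. ?G t)"
    by (rule M_eq_sum_prod_W) (use p0 in simp)
  also have "\<dots> = (\<Sum>m\<in>{0..l}. \<Sum>r\<in>coprime_residues (p ^ m). ?G (p ^ (l - m) * r))"
    by (rule sum_lessThan_prime_power_split[OF p])
  also have "\<dots> = of_nat (totient (p ^ l)) ^ s * (\<Sum>m\<in>{0..l}. T k s a (p ^ m))"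
    using block by (simp add: sum_distrib_left)
  finally show ?thesis using p0 by (simp add: field_simps)
qed

lemma T_prime_power_eq_0:
  assumes p: "prime p" and k: "k > 0" and a: "\<not> int p dvd Gcd (a ` {1..s})" and m: "xi k p < m"
  shows "T k s a (p ^ m) = 0"
proof -
  obtain j0 where j0: "j0 \<in> {1..s}" "\<not> int p dvd a j0" using a by (auto simp: dvd_Gcd_iff)
  have vanish: "(\<Prod>j\<in>{1..s}. W k (p ^ m) (a j * int r)) = 0" if r: "r \<in> coprime_residues (p ^ m)" for r
  proof -
    have "\<not> p dvd r" using r m by (simp add: coprime_residues_def prime_coprime_right_iff[OF p])
    then have "\<not> int p dvd a j0 * int r" using j0(2) p by (simp add: prime_dvd_mult_iff)
    then have "W k (p ^ m) (a j0 * int r) = 0" by (rule W_prime_power_eq_0[OF p k m])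
    then show ?thesis using j0(1) by (auto simp: prod_zero_iff)
  qed
  have "(\<Sum>r\<in>coprime_residues (p ^ m). \<Prod>j\<in>{1..s}. W k (p ^ m) (a j * int r)) = 0"
    using vanish by (intro sum.neutral) blast
  then show ?thesis using prime_gt_0_nat[OF p] by (simp add: T_eq_sum_coprime_residues)
qed

lemma sum_T_prime_powers_stable:
  assumes p: "prime p" and k: "k > 0" and a: "\<not> int p dvd Gcd (a ` {1..s})" and l: "xi k p \<le> l"
  shows "(\<Sum>m\<in>{0..l}. T k s a (p ^ m)) = (\<Sum>m\<in>{0..xi k p}. T k s a (p ^ m))"
proof -
  obtain d where d: "l = xi k p + d" using l le_Suc_ex by blast
  have "(\<Sum>m\<in>{xi k p + 1..xi k p + d}. T k s a (p ^ m)) = 0"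
    using T_prime_power_eq_0[OF p k a] by (intro sum.neutral) auto
  then show ?thesis unfolding d by (subst sum.ub_add_nat) simp_all
qed

definition solution_density :: "nat \<Rightarrow> nat \<Rightarrow> (nat \<Rightarrow> int) \<Rightarrow> nat \<Rightarrow> real" where
  "solution_density k s a q = real q * real (M k s a q) / real (totient q) ^ s"

lemma solution_density_prime_power_eq_sum_T:
  assumes "prime p"
  shows "of_real (solution_density k s a (p ^ l)) = (\<Sum>m\<in>{0..l}. T k s a (p ^ m))"
  using sum_T_prime_powers[OF assms] by (simp add: solution_density_def)

lemma solution_density_lower_bound:
  assumes q: "q > 0" and s: "s > 0" and M: "M k s a q > 0"
  shows "1 / real q ^ (s - 1) \<le> solution_density k s a q"
proof -
  have tot: "0 < real (totient q)" "real (totient q) \<le> real q" using q totient_le by auto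
  have "1 / real q ^ (s - 1) = real q * 1 / real q ^ s"
    using q s by (cases s) simp_all
  also have "\<dots> \<le> real q * real (M k s a q) / real (totient q) ^ s"
  proof (rule frac_le)
    have "1 \<le> real (M k s a q)" using M by simp
    then show "real q * 1 \<le> real q * real (M k s a q)" by (rule mult_left_mono) simp
    show "real (totient q) ^ s \<le> real q ^ s" using tot by (simp add: power_mono)
  qed (use tot in simp_all)
  finally show ?thesis unfolding solution_density_def .
qed

lemma solution_density_prime_power_tendsto:
  assumes p: "prime p" and k: "k > 0" and a: "\<not> int p dvd Gcd (a ` {1..s})"
  shows "(\<lambda>n. solution_density k s a (p ^ n)) \<longlonglongrightarrow> solution_density k s a (p ^ xi k p)"
proof (rule tendsto_eventually, rule eventually_sequentiallyI)
  fix n assume "xi k p \<le> n"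
  then have "complex_of_real (solution_density k s a (p ^ n)) = of_real (solution_density k s a (p ^ xi k p))"
    unfolding solution_density_prime_power_eq_sum_T[OF p] by (rule sum_T_prime_powers_stable[OF p k a])
  then show "solution_density k s a (p ^ n) = solution_density k s a (p ^ xi k p)" by simp
qed

lemma chi_eq_solution_density:
  assumes "prime p" and "k > 0" and "\<not> int p dvd Gcd (a ` {1..s})"
  shows "chi k s a p = solution_density k s a (p ^ xi k p)"
  using solution_density_prime_power_tendsto[OF assms] unfolding chi_def solution_density_def
  by (simp add: limI)

section \<open>Hensel lifting\<close>

text \<open>Multiplying the coordinate \<open>j0\<close> by \<open>1 + p^(n-v) t\<close> changes the form by \<open>p^n c t\<close> modulo
  \<open>p^(n+1)\<close>, where \<open>c\<close> is prime to \<open>p\<close>; so \<open>t\<close> can be chosen to cancel the quotient of the form by \<open>p^n\<close>.\<close>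
lemma lift_unit_solution:
  fixes p k n j0 :: nat and a y :: "nat \<Rightarrow> int"
  assumes p: "prime p" and k: "k > 0" and n: "xi k p \<le> n"
    and I: "finite I" and j0: "j0 \<in> I" "\<not> int p dvd a j0"
    and units: "\<forall>j\<in>I. \<not> int p dvd y j"
    and sol: "int p ^ n dvd (\<Sum>j\<in>I. a j * y j ^ k)"
  shows "\<exists>y'. (\<forall>j\<in>I. [y' j = y j] (mod int p ^ (n - multiplicity p k))) \<and>
              (\<forall>j\<in>I. \<not> int p dvd y' j) \<and> int p ^ (n + 1) dvd (\<Sum>j\<in>I. a j * y' j ^ k)"
proof -
  define v where "v = multiplicity p k"
  define i where "i = n - v"
  have i1: "i \<ge> 1" and i2: "p = 2 \<Longrightarrow> i \<ge> 2" and ni: "n = i + v"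
    using n unfolding i_def v_def xi_def nu_def by (auto split: if_splits)
  have pint: "prime (int p)" using p by simp
  have "\<not> p dvd k div p ^ v"
    unfolding v_def by (rule multiplicity_decompose) (use k p in \<open>auto simp: prime_gt_1_nat\<close>)
  define c where "c = a j0 * y j0 ^ k * int (k div p ^ v)"
  have "\<not> int p dvd c"
    using \<open>\<not> p dvd k div p ^ v\<close> units j0 k pint by (simp add: c_def prime_dvd_mult_iff prime_dvd_power_iff)
  then have "gcd c (int p) = 1" using prime_coprime_right_iff[OF pint] by (simp add: coprime_iff_gcd_eq_1)
  obtain \<sigma> where \<sigma>: "(\<Sum>j\<in>I. a j * y j ^ k) = int p ^ n * \<sigma>" using sol ..
  obtain t where t: "[c * t = - \<sigma>] (mod int p)"
    using cong_solve_dvd_int[of c "int p" "- \<sigma>"] \<open>gcd c (int p) = 1\<close> by auto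
  define u where "u = 1 + int p ^ i * t"
  define y' where "y' = y(j0 := y j0 * u)"
  have "[u ^ k = 1 + int (k div p ^ v) * int p ^ n * t] (mod int p ^ (n + 1))"
    using one_plus_prime_power_pow_cong[OF p i1 i2, of t k] unfolding u_def v_def ni by simp
  from cong_diff[OF this cong_refl[of 1]]
  have "[u ^ k - 1 = int (k div p ^ v) * int p ^ n * t] (mod int p ^ (n + 1))" by simp
  from cong_scalar_left[OF this, of "a j0 * y j0 ^ k"]
  have "[a j0 * y j0 ^ k * (u ^ k - 1) = int p ^ n * (c * t)] (mod int p ^ (n + 1))"
    by (simp add: c_def ac_simps)
  from cong_add[OF cong_refl[of "int p ^ n * \<sigma>"] this]
  have "[int p ^ n * \<sigma> + a j0 * y j0 ^ k * (u ^ k - 1) = int p ^ n * (\<sigma> + c * t)] (mod int p ^ (n + 1))"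
    by (simp add: distrib_left)
  moreover have "(\<Sum>j\<in>I. a j * y' j ^ k) = int p ^ n * \<sigma> + a j0 * y j0 ^ k * (u ^ k - 1)"
    unfolding y'_def sum_fun_upd_eq[OF I j0(1), of "\<lambda>j x. a j * x ^ k" y "y j0 * u"] \<sigma>
    by (simp add: power_mult_distrib algebra_simps)
  ultimately have "[(\<Sum>j\<in>I. a j * y' j ^ k) = int p ^ n * (\<sigma> + c * t)] (mod int p ^ (n + 1))"
    by simp
  moreover have "int p ^ (n + 1) dvd int p ^ n * (\<sigma> + c * t)"
    using t by (simp add: cong_iff_dvd_diff add.commute)
  ultimately have "int p ^ (n + 1) dvd (\<Sum>j\<in>I. a j * y' j ^ k)" by (simp add: cong_dvd_iff)
  moreover have "int p dvd int p ^ i * t" using i1 by (simp add: dvd_power dvd_mult2)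
  then have "int p dvd u \<longleftrightarrow> int p dvd 1" unfolding u_def by (rule dvd_add_left_iff)
  then have "\<not> int p dvd u" using not_prime_unit[of "int p"] pint by auto
  then have "\<forall>j\<in>I. \<not> int p dvd y' j" using units pint by (simp add: y'_def prime_dvd_mult_iff)
  moreover have "[y' j = y j] (mod int p ^ (n - v))" for j
    unfolding y'_def u_def ni by (simp add: cong_iff_dvd_diff algebra_simps)
  ultimately show ?thesis unfolding v_def by blast
qed

lemma padic_unit_solution_if_M_pos:
  assumes p: "prime p" and k: "k > 0" and a: "\<not> int p dvd Gcd (a ` {1..s})"
    and M: "M k s a (p ^ xi k p) > 0"
  shows "padic_unit_solution k s a p"
proof -
  let ?X = "xi k p" and ?S = "\<lambda>y. \<Sum>j\<in>{1..s}. a j * y j ^ k"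
  define P where "P n y \<longleftrightarrow> (\<forall>j\<in>{1..s}. \<not> int p dvd y j) \<and> int p ^ (?X + n) dvd ?S y" for n y
  define Q where "Q n y y' \<longleftrightarrow> (\<forall>j\<in>{1..s}. [y' j = y j] (mod int p ^ n))" for n y y'
  obtain j0 where j0: "j0 \<in> {1..s}" "\<not> int p dvd a j0" using a by (auto simp: dvd_Gcd_iff)
  have X: "?X \<ge> multiplicity p k + 1" by (simp add: xi_def nu_def)
  have start: "\<exists>y. P 0 y"
  proof -
    obtain x where x: "x \<in> PiE {1..s} (\<lambda>_. coprime_residues (p ^ ?X))" "int (p ^ ?X) dvd ?S (\<lambda>j. int (x j))"
      using M unfolding M_def coprime_residues_def by (metis (no_types, lifting) card.empty less_irrefl mem_Collect_eq equals0I)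
    then have "P 0 (\<lambda>j. int (x j))"
      using X by (auto simp: P_def PiE_iff coprime_residues_def prime_coprime_right_iff[OF p])
    then show ?thesis by blast
  qed
  have step: "\<exists>y'. P (Suc n) y' \<and> Q n y y'" if y: "P n y" for n y
  proof -
    obtain y' where y': "\<forall>j\<in>{1..s}. [y' j = y j] (mod int p ^ (?X + n - multiplicity p k))"
      "\<forall>j\<in>{1..s}. \<not> int p dvd y' j" "int p ^ (?X + n + 1) dvd ?S y'"
      using lift_unit_solution[of p k "?X + n" "{1..s}" j0 a y] p k j0 y unfolding P_def by auto
    moreover have "int p ^ n dvd int p ^ (?X + n - multiplicity p k)"
      using X by (intro le_imp_power_dvd) simp
    ultimately show ?thesis unfolding P_def Q_def by (auto intro: cong_dvd_modulus)
  qed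
  obtain Y where Y: "\<And>n. P n (Y n) \<and> Q n (Y n) (Y (Suc n))"
    using dependent_nat_choice[of P Q, OF start step] by blast
  have "int p ^ n dvd ?S (Y n)" for n
    using Y[of n] unfolding P_def by (meson dvd_trans le_add2 le_imp_power_dvd)
  then show ?thesis unfolding padic_unit_solution_def using Y
    using p by (intro exI[of _ "\<lambda>j n. Y n j"]) (auto simp: P_def Q_def cong_0_iff prime_coprime_right_iff)
qed

theorem lemma2p5:
  fixes k s p :: nat and a :: "nat \<Rightarrow> int"
  assumes "k > 0" and "s > 0"
    and "\<forall>j\<in>{1..s}. a j \<noteq> 0"
    and "prime p"
    and "\<not> int p dvd Gcd (a ` {1..s})"
  shows "((\<lambda>n. real p ^ n * real (M k s a (p ^ n)) / real (totient (p ^ n)) ^ s)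
            \<longlonglongrightarrow> chi k s a p) \<and>
         (\<forall>l \<ge> xi k p.
           of_real (chi k s a p) = (\<Sum>m\<in>{0..l}. T k s a (p ^ m)) \<and>
           (\<Sum>m\<in>{0..l}. T k s a (p ^ m)) = (\<Sum>m\<in>{0..xi k p}. T k s a (p ^ m)) \<and>
           (\<Sum>m\<in>{0..xi k p}. T k s a (p ^ m)) =
             of_real (real p ^ xi k p * real (M k s a (p ^ xi k p))
                        / real (totient (p ^ xi k p)) ^ s)) \<and>
         (M k s a (p ^ xi k p) > 0 \<longrightarrow>
           padic_unit_solution k s a p \<and>
           chi k s a p \<ge> 1 / real p ^ ((s - 1) * xi k p) \<and>
           1 / real p ^ ((s - 1) * xi k p) > 0)"
proof -
  have p: "prime p" and k: "k > 0" and a: "\<not> int p dvd Gcd (a ` {1..s})" using assms by simp_all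
  have p0: "p > 0" using prime_gt_0_nat[OF p] .
  have chi: "chi k s a p = solution_density k s a (p ^ xi k p)"
    by (rule chi_eq_solution_density[OF p k a])
  have density_eq_sum_T: "of_real (solution_density k s a (p ^ l)) = (\<Sum>m\<in>{0..l}. T k s a (p ^ m))" for l
    by (rule solution_density_prime_power_eq_sum_T[OF p])
  show ?thesis
  proof (intro conjI allI impI)
    show "(\<lambda>n. real p ^ n * real (M k s a (p ^ n)) / real (totient (p ^ n)) ^ s) \<longlonglongrightarrow> chi k s a p"
      using solution_density_prime_power_tendsto[OF p k a] unfolding chi solution_density_def by simp
  next
    fix l assume l: "xi k p \<le> l"
    show "(\<Sum>m\<in>{0..l}. T k s a (p ^ m)) = (\<Sum>m\<in>{0..xi k p}. T k s a (p ^ m))"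
      by (rule sum_T_prime_powers_stable[OF p k a l])
    then show "of_real (chi k s a p) = (\<Sum>m\<in>{0..l}. T k s a (p ^ m))"
      by (simp add: chi density_eq_sum_T)
  next
    show "(\<Sum>m\<in>{0..xi k p}. T k s a (p ^ m)) =
            of_real (real p ^ xi k p * real (M k s a (p ^ xi k p)) / real (totient (p ^ xi k p)) ^ s)"
      by (simp add: density_eq_sum_T[symmetric] solution_density_def)
  next
    assume M: "M k s a (p ^ xi k p) > 0"
    show "padic_unit_solution k s a p" by (rule padic_unit_solution_if_M_pos[OF p k a M])
    have "1 / real (p ^ xi k p) ^ (s - 1) \<le> chi k s a p"
      unfolding chi using solution_density_lower_bound[OF _ assms(2) M] p0 by simp
    then show "1 / real p ^ ((s - 1) * xi k p) \<le> chi k s a p"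
      by (simp add: power_mult mult.commute)
    show "1 / real p ^ ((s - 1) * xi k p) > 0" using p0 by simp
  qed
qed

end
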